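(* Let $I\subseteq R$ be a good ideal and $a_1,\dots,a_n\in\mathbb N$, and put $l=a_1+\dots+a_n+1$. Then $I_{a_1,\dots,a_n}=I^l:\langle\mu_1^{a_1}\cdots\mu_n^{a_n}\rangle$.
   Context: Let $\mathbb K$ be a field, $R=\mathbb K[x_1,\dots,x_n]$, $\mathfrak m=\langle x_1,\dots,x_n\rangle$, $\mathbb N=\{0,1,2,\dots\}$. A monomial $x_1^{\alpha_1}\cdots x_n^{\alpha_n}$ is identified with the point $(\alpha_1,\dots,\alpha_n)\in\mathbb N^n$. For a monomial ideal $I$, $G(I)$ denotes its (unique) minimal monomial generating set. If $I$ is an $\mathfrak m$-primary monomial ideal, then for each $i$ there is a unique $d_i\ge1$ with $x_i^{d_i}\in G(I)$; write $\mu_i=x_i^{d_i}$. For $(a_1,\dots,a_n)\in\mathbb N^n$ the box associated to $I$ is $B_{a_1,\dots,a_n}=([a_1d_1,(a_1+1)d_1]\times\cdots\times[a_nd_n,(a_n+1)d_n])\cap\mathbb N^n$; a monomial belongs to a box if its exponent vector does. An $\mathfrak m$-primary monomial ideal $I$ is called good if for every integer $l\ge1$, every element of $G(I^l)$ belongs to some box $B_{a_1,\dots,a_n}$ with $a_1+\dots+a_n=l-1$. For a good ideal $I$ and $a=(a_1,\dots,a_n)\in\mathbb N^n$, with $l=a_1+\dots+a_n+1$, define $I_{a_1,\dots,a_n}=\left\langle \frac{m}{\mu_1^{a_1}\cdots\mu_n^{a_n}} : m\in B_{a_1,\dots,a_n}\cap G(I^l)\right\rangle$ (every monomial in $B_{a_1,\dots,a_n}$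 is divisible by $\mu_1^{a_1}\cdots\mu_n^{a_n}$). *)

theory Defs
  imports Main
begin

text \<open>Monomials in the variables x_i, i :: 'n (a finite index type, so n = CARD('n)),
  are identified with exponent vectors 'n \<Rightarrow> nat.  Since monomial ideals of
  K[x_1..x_n] are determined by the monomials they contain, a monomial ideal is
  represented by its set of monomials (an upward closed set of exponent vectors).\<close>

type_synonym 'n monom = "'n \<Rightarrow> nat"

definition mdvd :: "'n monom \<Rightarrow> 'n monom \<Rightarrow> bool" where
  "mdvd u v \<longleftrightarrow> (\<forall>i. u i \<le> v i)"

definition mmult :: "'n monom \<Rightarrow> 'n monom \<Rightarrow> 'n monom" where
  "mmult u v = (\<lambda>i. u i + v i)"

definition mquot :: "'n monom \<Rightarrow> 'n monom \<Rightarrow> 'n monom" where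
  "mquot u v = (\<lambda>i. u i - v i)"

definition is_monomial_ideal :: "'n monom set \<Rightarrow> bool" where
  "is_monomial_ideal I \<longleftrightarrow> (\<forall>u\<in>I. \<forall>v. mdvd u v \<longrightarrow> v \<in> I)"

definition mgen :: "'n monom set \<Rightarrow> 'n monom set" where
  "mgen G = {v. \<exists>u\<in>G. mdvd u v}"

definition mingens :: "'n monom set \<Rightarrow> 'n monom set" where
  "mingens I = {u\<in>I. \<forall>v\<in>I. mdvd v u \<longrightarrow> v = u}"

definition mideal_mult :: "'n monom set \<Rightarrow> 'n monom set \<Rightarrow> 'n monom set" where
  "mideal_mult I J = mgen {mmult u v | u v. u \<in> I \<and> v \<in> J}"

primrec mideal_pow :: "'n monom set \<Rightarrow> nat \<Rightarrow> 'n monom set" where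
  "mideal_pow I 0 = UNIV"
| "mideal_pow I (Suc l) = mideal_mult I (mideal_pow I l)"

definition mcolon :: "'n monom set \<Rightarrow> 'n monom \<Rightarrow> 'n monom set" where
  "mcolon J u = {v. mmult v u \<in> J}"

definition xpow :: "'n \<Rightarrow> nat \<Rightarrow> 'n monom" where
  "xpow i d = (\<lambda>j. if j = i then d else 0)"

text \<open>m-primary monomial ideal: proper, and contains a power of each variable
  (equivalently its radical is m).\<close>
definition m_primary :: "'n monom set \<Rightarrow> bool" where
  "m_primary I \<longleftrightarrow> is_monomial_ideal I \<and> (\<lambda>_. 0) \<notin> I \<and> (\<forall>i. \<exists>d. xpow i d \<in> I)"

definition dexp :: "'n monom set \<Rightarrow> 'n \<Rightarrow> nat" where
  "dexp I i = (THE d. 1 \<le> d \<and> xpow i d \<in> mingens I)"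

definition mupow :: "'n monom set \<Rightarrow> 'n monom \<Rightarrow> 'n monom" where
  "mupow I a = (\<lambda>i. a i * dexp I i)"

definition box :: "'n monom set \<Rightarrow> 'n monom \<Rightarrow> 'n monom set" where
  "box I a = {u. \<forall>i. a i * dexp I i \<le> u i \<and> u i \<le> (a i + 1) * dexp I i}"

definition good_ideal :: "('n::finite) monom set \<Rightarrow> bool" where
  "good_ideal I \<longleftrightarrow> m_primary I \<and>
     (\<forall>l\<ge>1. \<forall>m\<in>mingens (mideal_pow I l).
        \<exists>a. (\<Sum>i\<in>UNIV. a i) = l - 1 \<and> m \<in> box I a)"

definition I_sub :: "('n::finite) monom set \<Rightarrow> 'n monom \<Rightarrow> 'n monom set" where
  "I_sub I a = mgen {mquot m (mupow I a) | m.
      m \<in> box I a \<and> m \<in> mingens (mideal_pow I ((\<Sum>i\<in>UNIV. a i) + 1))}"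

end

theory Submission
  imports Defs Complex_Main
begin

(* Weigh exponent vectors by wdeg I u = sum_i u_i / d_i, so that mu^c has weight |c| and the
   box B_c lies in weight >= |c|. Goodness applied to u^k in I^k gives k * wdeg u >= k - 1 for
   every k, hence wdeg >= 1 on I and wdeg >= l on I^l; therefore each mu^c with |c| = l is a
   minimal generator of I^l.
   If x mu^a is in I^l, some minimal generator M of I^l dividing it lies in a box B_c with
   |c| = l - 1 = |a|. Either c = a, and then M / mu^a divides x; or c_i > a_i for some i, which
   forces x_i^(d_i) | x, and then the minimal generator mu^a x_i^(d_i) of I^l lies in B_a and
   its quotient by mu^a divides x. *)

lemma mdvd_refl [simp]: "mdvd u u"
  by (simp add: mdvd_def)

lemma mdvd_trans: "mdvd u v \<Longrightarrow> mdvd v w \<Longrightarrow> mdvd u w"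
  unfolding mdvd_def using le_trans by blast

lemma mdvd_neq_ex_less: "mdvd u v \<Longrightarrow> u \<noteq> v \<Longrightarrow> \<exists>i. u i < v i"
  unfolding mdvd_def by (meson ext le_neq_implies_less)

(* No hypothesis mdvd v u is needed: mquot truncates, and u_i - v_i <= x_i iff u_i <= x_i + v_i on nat. *)
lemma mdvd_mquot_iff: "mdvd (mquot u v) x \<longleftrightarrow> mdvd u (mmult x v)"
  by (simp add: mdvd_def mquot_def mmult_def le_diff_conv)

lemma is_monomial_idealD: "is_monomial_ideal J \<Longrightarrow> u \<in> J \<Longrightarrow> mdvd u v \<Longrightarrow> v \<in> J"
  unfolding is_monomial_ideal_def by blast

lemma subset_mgen: "G \<subseteq> mgen G"
  unfolding mgen_def using mdvd_refl by blast

lemma is_monomial_ideal_mgen: "is_monomial_ideal (mgen G)"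
  unfolding is_monomial_ideal_def mgen_def using mdvd_trans by blast

lemma is_monomial_ideal_mideal_pow: "is_monomial_ideal (mideal_pow I l)"
proof (cases l)
  case (Suc k)
  then show ?thesis using is_monomial_ideal_mgen by (simp add: mideal_mult_def)
qed (simp add: is_monomial_ideal_def)

lemma mmult_mem_mideal_pow_Suc:
  "u \<in> I \<Longrightarrow> v \<in> mideal_pow I k \<Longrightarrow> mmult u v \<in> mideal_pow I (Suc k)"
  using subset_mgen by (fastforce simp: mideal_mult_def)

lemma ex_mingens_mdvd:
  fixes v :: "('n::finite) monom"
  assumes "v \<in> S"
  shows "\<exists>m\<in>mingens S. mdvd m v"
  using assms
proof (induction "sum v UNIV" arbitrary: v rule: less_induct)
  case less
  show ?case
  proof (cases "v \<in> mingens S")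
    case False
    then obtain u where u: "u \<in> S" "mdvd u v" "u \<noteq> v"
      using less.prems unfolding mingens_def by blast
    then have "sum u UNIV < sum v UNIV"
      using mdvd_neq_ex_less[OF u(2,3)] unfolding mdvd_def
      by (intro sum_strict_mono_ex1) auto
    with less.hyps u(1) obtain m where "m \<in> mingens S" "mdvd m u" by blast
    then show ?thesis using u(2) mdvd_trans by blast
  qed (use mdvd_refl in blast)
qed

lemma
  assumes "m_primary I"
  shows dexp_pos: "0 < dexp I i"
    and xpow_dexp_mingens: "xpow i (dexp I i) \<in> mingens I"
proof -
  define d where "d = (LEAST d. xpow i d \<in> I)"
  have d_mem: "xpow i d \<in> I"
    unfolding d_def using assms by (metis LeastI m_primary_def)
  have d_least: "d \<le> d'" if "xpow i d' \<in> I" for d'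
    unfolding d_def using that by (rule Least_le)
  have "xpow i 0 = (\<lambda>_. 0)"
    by (simp add: xpow_def)
  with d_mem assms have "0 < d"
    unfolding m_primary_def by (metis gr0I)
  have d_mingens: "xpow i d \<in> mingens I"
    unfolding mingens_def
  proof (safe intro!: d_mem)
    fix v assume v: "v \<in> I" "mdvd v (xpow i d)"
    then have v_eq: "v = xpow i (v i)" and "v i \<le> d"
      by (auto simp: mdvd_def xpow_def fun_eq_iff split: if_splits)
    moreover have "d \<le> v i"
      using v(1) by (intro d_least) (simp flip: v_eq)
    ultimately show "v = xpow i d" by simp
  qed
  have "dexp I i = d"
    unfolding dexp_def
  proof (rule the_equality)
    fix d' assume d': "1 \<le> d' \<and> xpow i d' \<in> mingens I"
    then have "d \<le> d'" using d_least unfolding mingens_def by blast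
    then have "mdvd (xpow i d) (xpow i d')" by (simp add: mdvd_def xpow_def)
    with d' d_mem have "xpow i d = xpow i d'" unfolding mingens_def by blast
    from fun_cong[OF this, of i] show "d' = d" by (simp add: xpow_def)
  qed (use \<open>0 < d\<close> d_mingens in auto)
  with \<open>0 < d\<close> d_mingens show "0 < dexp I i" "xpow i (dexp I i) \<in> mingens I" by simp_all
qed

lemma xpow_dexp_mem:
  assumes "m_primary I"
  shows "xpow i (dexp I i) \<in> I"
  using xpow_dexp_mingens[OF assms] by (simp add: mingens_def)

lemma good_ideal_m_primary: "good_ideal I \<Longrightarrow> m_primary I"
  by (simp add: good_ideal_def)

lemma good_ideal_mingens_mem_box:
  assumes "good_ideal I" "m \<in> mingens (mideal_pow I (k + 1))"
  obtains c where "sum c UNIV = k" "m \<in> box I c"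
proof -
  have "1 \<le> k + 1" by simp
  then have "\<exists>c. sum c UNIV = k + 1 - 1 \<and> m \<in> box I c"
    using assms unfolding good_ideal_def by blast
  then show ?thesis using that by auto
qed

lemma sum_fun_upd_Suc:
  fixes a :: "'n::finite \<Rightarrow> nat"
  shows "sum (a(i := Suc (a i))) UNIV = sum a UNIV + 1"
  by (simp add: sum.remove[of UNIV i])

lemma mupow_fun_upd_Suc:
  "mupow I (a(i := Suc (a i))) = mmult (xpow i (dexp I i)) (mupow I a)"
  by (simp add: mupow_def mmult_def xpow_def fun_eq_iff)

lemma mupow_mdvd_of_mem_box: "m \<in> box I a \<Longrightarrow> mdvd (mupow I a) m"
  by (simp add: box_def mupow_def mdvd_def)

lemma mupow_fun_upd_Suc_mem_box: "mupow I (a(i := Suc (a i))) \<in> box I a"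
  by (simp add: box_def mupow_def)

lemma mupow_mem_mideal_pow:
  fixes I :: "('n::finite) monom set"
  assumes "m_primary I"
  shows "sum c UNIV = k \<Longrightarrow> mupow I c \<in> mideal_pow I k"
proof (induction k arbitrary: c)
  case 0
  then show ?case by simp
next
  case (Suc k)
  then obtain i where "0 < c i"
    by (metis Zero_not_Suc gr0I sum.neutral)
  define c' where "c' = c(i := c i - 1)"
  have c: "c = c'(i := Suc (c' i))"
    using \<open>0 < c i\<close> by (simp add: c'_def)
  have "sum c' UNIV = k"
    using Suc.prems sum_fun_upd_Suc[of c' i] by (simp flip: c)
  then have "mupow I c' \<in> mideal_pow I k"
    by (rule Suc.IH)
  then show ?case
    unfolding c mupow_fun_upd_Suc by (intro mmult_mem_mideal_pow_Suc xpow_dexp_mem assms)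
qed

lemma scale_mem_mideal_pow: "u \<in> I \<Longrightarrow> (\<lambda>i. k * u i) \<in> mideal_pow I k"
proof (induction k)
  case (Suc k)
  have "(\<lambda>i. Suc k * u i) = mmult u (\<lambda>i. k * u i)" by (simp add: mmult_def)
  then show ?case using Suc mmult_mem_mideal_pow_Suc by metis
qed simp

definition wdeg :: "('n::finite) monom set \<Rightarrow> 'n monom \<Rightarrow> real" where
  "wdeg I u = (\<Sum>i\<in>UNIV. real (u i) / real (dexp I i))"

lemma wdeg_mono: "mdvd u v \<Longrightarrow> wdeg I u \<le> wdeg I v"
  unfolding wdeg_def mdvd_def by (intro sum_mono divide_right_mono) auto

lemma wdeg_strict_mono:
  assumes "m_primary I" "mdvd u v" "u \<noteq> v"
  shows "wdeg I u < wdeg I v"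
  unfolding wdeg_def
proof (rule sum_strict_mono_ex1)
  show "\<forall>i\<in>UNIV. real (u i) / real (dexp I i) \<le> real (v i) / real (dexp I i)"
    using assms(2) unfolding mdvd_def by (auto intro: divide_right_mono)
  show "\<exists>i\<in>UNIV. real (u i) / real (dexp I i) < real (v i) / real (dexp I i)"
    using mdvd_neq_ex_less[OF assms(2,3)] dexp_pos[OF assms(1)]
    by (auto intro!: divide_strict_right_mono)
qed simp

lemma wdeg_mmult: "wdeg I (mmult u v) = wdeg I u + wdeg I v"
  unfolding wdeg_def mmult_def by (simp add: add_divide_distrib sum.distrib)

lemma wdeg_scale: "wdeg I (\<lambda>i. k * u i) = real k * wdeg I u"
  unfolding wdeg_def by (simp add: sum_distrib_left)

lemma wdeg_mupow:
  assumes "m_primary I"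
  shows "wdeg I (mupow I c) = real (sum c UNIV)"
  unfolding wdeg_def mupow_def using dexp_pos[OF assms, THEN less_not_refl2] by simp

lemma good_ideal_wdeg_ge_1:
  fixes I :: "('n::finite) monom set"
  assumes good: "good_ideal I" and "u \<in> I"
  shows "1 \<le> wdeg I u"
proof -
  have bound: "real k \<le> real (k + 1) * wdeg I u" for k
  proof -
    obtain m where m: "m \<in> mingens (mideal_pow I (k + 1))" "mdvd m (\<lambda>i. (k + 1) * u i)"
      using ex_mingens_mdvd scale_mem_mideal_pow[OF \<open>u \<in> I\<close>] by blast
    then obtain c where c: "sum c UNIV = k" "m \<in> box I c"
      using good good_ideal_mingens_mem_box by blast
    have "real k = wdeg I (mupow I c)"
      using wdeg_mupow[OF good_ideal_m_primary[OF good], of c] c(1) by simp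
    also have "\<dots> \<le> wdeg I (\<lambda>i. (k + 1) * u i)"
      using mdvd_trans[OF mupow_mdvd_of_mem_box[OF c(2)] m(2)] by (rule wdeg_mono)
    finally show ?thesis by (simp only: wdeg_scale)
  qed
  show ?thesis
  proof (rule ccontr)
    assume "\<not> 1 \<le> wdeg I u"
    then obtain k where "1 < real k * (1 - wdeg I u)"
      using ex_less_of_nat_mult[of "1 - wdeg I u" 1] by auto
    moreover have "real k * (1 - wdeg I u) \<le> 1"
      using bound[of "k - 1"] \<open>\<not> 1 \<le> wdeg I u\<close>
      by (cases k) (auto simp: algebra_simps)
    ultimately show False by simp
  qed
qed

lemma good_ideal_wdeg_mideal_pow:
  assumes "good_ideal I"
  shows "v \<in> mideal_pow I k \<Longrightarrow> real k \<le> wdeg I v"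
proof (induction k arbitrary: v)
  case 0
  show ?case unfolding wdeg_def by (simp add: sum_nonneg)
next
  case (Suc k)
  then obtain u w where "u \<in> I" "w \<in> mideal_pow I k" "mdvd (mmult u w) v"
    unfolding mideal_pow.simps mideal_mult_def mgen_def by blast
  then have "real (Suc k) \<le> wdeg I u + wdeg I w"
    using good_ideal_wdeg_ge_1[OF assms] Suc.IH by fastforce
  also have "\<dots> \<le> wdeg I v"
    using wdeg_mono[OF \<open>mdvd (mmult u w) v\<close>] by (simp add: wdeg_mmult)
  finally show ?case .
qed

lemma good_ideal_mupow_mingens:
  assumes good: "good_ideal I"
  shows "mupow I c \<in> mingens (mideal_pow I (sum c UNIV))"
  unfolding mingens_def
proof (safe intro!: mupow_mem_mideal_pow good_ideal_m_primary[OF good])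
  fix v assume "v \<in> mideal_pow I (sum c UNIV)" "mdvd v (mupow I c)"
  then show "v = mupow I c"
    using good_ideal_wdeg_mideal_pow[OF good] wdeg_strict_mono wdeg_mupow
      good_ideal_m_primary[OF good] by (metis not_less)
qed

lemma I_sub_memI:
  "m \<in> box I a \<Longrightarrow> m \<in> mingens (mideal_pow I (sum a UNIV + 1)) \<Longrightarrow>
    mdvd m (mmult x (mupow I a)) \<Longrightarrow> x \<in> I_sub I a"
  unfolding I_sub_def mgen_def by (auto simp: mdvd_mquot_iff)

lemma I_sub_subset_mcolon:
  "I_sub I a \<subseteq> mcolon (mideal_pow I (sum a UNIV + 1)) (mupow I a)"
proof
  fix x assume "x \<in> I_sub I a"
  then obtain m where "m \<in> mingens (mideal_pow I (sum a UNIV + 1))" "mdvd m (mmult x (mupow I a))"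
    unfolding I_sub_def mgen_def by (auto simp: mdvd_mquot_iff)
  then show "x \<in> mcolon (mideal_pow I (sum a UNIV + 1)) (mupow I a)"
    unfolding mcolon_def mingens_def
    by (blast intro: is_monomial_idealD[OF is_monomial_ideal_mideal_pow])
qed

lemma mcolon_subset_I_sub:
  fixes I :: "('n::finite) monom set"
  assumes good: "good_ideal I"
  shows "mcolon (mideal_pow I (sum a UNIV + 1)) (mupow I a) \<subseteq> I_sub I a"
proof
  fix x assume "x \<in> mcolon (mideal_pow I (sum a UNIV + 1)) (mupow I a)"
  then obtain m where m: "m \<in> mingens (mideal_pow I (sum a UNIV + 1))"
      "mdvd m (mmult x (mupow I a))"
    using ex_mingens_mdvd unfolding mcolon_def mem_Collect_eq by blast
  then obtain c where c: "sum c UNIV = sum a UNIV" "m \<in> box I c"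
    using good good_ideal_mingens_mem_box by blast
  show "x \<in> I_sub I a"
  proof (cases "\<exists>i. a i < c i")
    case False
    have "c j = a j" for j
      using sum_mono_inv[OF c(1), of j] False by (simp add: not_less)
    then have "c = a" ..
    with c(2) m show ?thesis
      by (intro I_sub_memI) simp_all
  next
    case True
    then obtain i where "a i < c i" by blast
    have "(a i + 1) * dexp I i \<le> c i * dexp I i"
      using \<open>a i < c i\<close> by (intro mult_right_mono) auto
    also have "\<dots> \<le> m i"
      using c(2) by (simp add: box_def)
    also have "\<dots> \<le> x i + a i * dexp I i"
      using m(2) by (simp add: mdvd_def mmult_def mupow_def)
    finally have "dexp I i \<le> x i"
      by simp
    then have "mdvd (mupow I (a(i := Suc (a i)))) (mmult x (mupow I a))"
      by (simp add: mupow_fun_upd_Suc mdvd_def mmult_def xpow_def)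
    moreover have "mupow I (a(i := Suc (a i))) \<in> mingens (mideal_pow I (sum a UNIV + 1))"
      using good_ideal_mupow_mingens[OF good, of "a(i := Suc (a i))"]
      by (simp only: sum_fun_upd_Suc)
    ultimately show ?thesis
      using I_sub_memI[OF mupow_fun_upd_Suc_mem_box] by blast
  qed
qed

theorem mainTheorem4:
  fixes I :: "('n::finite) monom set" and a :: "'n monom"
  assumes "good_ideal I"
  shows "I_sub I a = mcolon (mideal_pow I ((\<Sum>i\<in>UNIV. a i) + 1)) (mupow I a)"
  using I_sub_subset_mcolon mcolon_subset_I_sub[OF assms] by (rule equalityI)

end
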